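(* Let $I=(a..c)$ be a conserved interval of $\mathcal{P}$ and let $F$ be a set of frontiers of $I$. Then, in each $P_k$, the elements of $F$ are either all positive or all negative.
   Context: Let $n\geq 2$ and let $\mathcal{P}=\{P_1,\ldots,P_K\}$ be signed permutations of $\{1,\ldots,n\}$: each $P_k$ is an ordering of $1,\ldots,n$ in which each element carries a sign $+$ (positive) or $-$ (negative). Assume $P_1=(+1,+2,\ldots,+n)$ and that every $P_k$ has first element $+1$ and last element $+n$. For integers $i\leq j$ write $(i..j)=\{i,\ldots,j\}$. A conserved interval of $\mathcal{P}$ is either a singleton, or a set $(a..c)$ with $a<c$ which (ignoring signs) occupies consecutive positions in every $P_k$ and which, in every $P_k$, has either $+a$ at its left end and $+c$ at its right end, or $-c$ at its left end and $-a$ at its right end. For a conserved interval $I=(a..c)$, a set $\{f_1,\ldots,f_k\}$ with $a=f_1<f_2<\cdots<f_k=c$ is a set of frontiers of $I$ if $(f_i..f_j)$ is a conserved interval for all $1\leq i<j\leq k$. *)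

theory Defs
  imports Main
begin

(* A signed permutation of {1..n} is an int list: entry x stands for element |x|
   with sign + if x > 0 and - if x < 0. *)
definition signed_perm :: "nat \<Rightarrow> int list \<Rightarrow> bool" where
  "signed_perm n xs \<longleftrightarrow> length xs = n \<and> distinct (map abs xs) \<and> set (map abs xs) = {1..int n}"

definition conserved_in :: "int list \<Rightarrow> int \<Rightarrow> int \<Rightarrow> bool" where
  "conserved_in xs a c \<longleftrightarrow> a < c \<and>
     (\<exists>i j. i < j \<and> j < length xs \<and>
        set (map abs (take (j - i + 1) (drop i xs))) = {a..c} \<and>
        ((xs ! i = a \<and> xs ! j = c) \<or> (xs ! i = - c \<and> xs ! j = - a)))"

definition conserved :: "nat \<Rightarrow> int list list \<Rightarrow> int \<Rightarrow> int \<Rightarrow> bool" where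
  "conserved n Ps a c \<longleftrightarrow>
     (a = c \<and> a \<in> {1..int n}) \<or> (a < c \<and> (\<forall>xs\<in>set Ps. conserved_in xs a c))"

definition frontiers :: "nat \<Rightarrow> int list list \<Rightarrow> int \<Rightarrow> int \<Rightarrow> int set \<Rightarrow> bool" where
  "frontiers n Ps a c F \<longleftrightarrow> F \<subseteq> {a..c} \<and> a \<in> F \<and> c \<in> F \<and>
     (\<forall>f\<in>F. \<forall>g\<in>F. f < g \<longrightarrow> conserved n Ps f g)"

end

theory Submission
  imports Defs
begin

text \<open>Every frontier f < c of I delimits, together with c, the conserved interval (f..c), whose
  ends carry equal signs in each permutation. Hence in each permutation all frontiers carry the
  sign of c; since no element occurs with both signs, this sign is well defined.\<close>

lemma signed_perm_not_both_signs:
  assumes "signed_perm n xs" "x \<in> set xs"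
  shows "- x \<notin> set xs"
proof
  assume neg: "- x \<in> set xs"
  have inj: "inj_on abs (set xs)" using assms(1) by (simp add: signed_perm_def distinct_map)
  have "x = - x" using inj_onD[OF inj _ assms(2) neg] by simp
  hence "x = 0" by simp
  moreover have "\<bar>x\<bar> \<in> set (map abs xs)" using assms(2) by simp
  ultimately show False using assms(1) by (simp add: signed_perm_def)
qed

lemma signed_perm_mem_or_neg_mem:
  assumes "signed_perm n xs" "a \<in> {1..int n}"
  shows "a \<in> set xs \<or> - a \<in> set xs"
proof -
  have "a \<in> set (map abs xs)" using assms by (simp add: signed_perm_def)
  then obtain y where "y \<in> set xs" "\<bar>y\<bar> = a" by auto
  thus ?thesis by (cases "y \<ge> 0") auto
qed

lemma conserved_in_ends_same_sign:
  assumes "conserved_in xs a c"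
  shows "(a \<in> set xs \<and> c \<in> set xs) \<or> (- c \<in> set xs \<and> - a \<in> set xs)"
  using assms unfolding conserved_in_def by (metis less_trans nth_mem)

lemma conserved_in_left_end_pos:
  assumes "signed_perm n xs" "conserved_in xs a c" "c \<in> set xs"
  shows "a \<in> set xs"
  using conserved_in_ends_same_sign[OF assms(2)] signed_perm_not_both_signs[OF assms(1,3)]
  by blast

lemma conserved_in_left_end_neg:
  assumes "signed_perm n xs" "conserved_in xs a c" "- c \<in> set xs"
  shows "- a \<in> set xs"
  using conserved_in_ends_same_sign[OF assms(2)] signed_perm_not_both_signs[OF assms(1,3)]
  by auto

theorem lemma6:
  fixes n :: nat and Ps :: "int list list" and a c :: int and F :: "int set"
  assumes "n \<ge> 2"
    and "Ps \<noteq> []"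
    and "hd Ps = [1..int n]"
    and "\<forall>xs\<in>set Ps. signed_perm n xs \<and> hd xs = 1 \<and> last xs = int n"
    and "conserved n Ps a c"
    and "frontiers n Ps a c F"
  shows "\<forall>xs\<in>set Ps. (\<forall>f\<in>F. f \<in> set xs) \<or> (\<forall>f\<in>F. - f \<in> set xs)"
proof
  fix xs assume xs: "xs \<in> set Ps"
  have sp: "signed_perm n xs" using assms(4) xs by blast
  have F: "F \<subseteq> {a..c}" "a \<in> F" "c \<in> F" "\<forall>f\<in>F. \<forall>g\<in>F. f < g \<longrightarrow> conserved n Ps f g"
    using assms(6) unfolding frontiers_def by auto
  have to_c: "conserved_in xs f c" if "f \<in> F" "f < c" for f
    using F(3,4) that xs unfolding conserved_def by auto
  have "c \<in> set xs \<or> - c \<in> set xs"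
  proof (cases "a = c")
    case True
    then show ?thesis using assms(5) signed_perm_mem_or_neg_mem[OF sp]
      unfolding conserved_def by auto
  next
    case False
    then show ?thesis using conserved_in_ends_same_sign[OF to_c[OF F(2)]] F(1,2) by force
  qed
  moreover have "f = c \<or> f < c" if "f \<in> F" for f using F(1) that by force
  ultimately show "(\<forall>f\<in>F. f \<in> set xs) \<or> (\<forall>f\<in>F. - f \<in> set xs)"
    using conserved_in_left_end_pos[OF sp to_c] conserved_in_left_end_neg[OF sp to_c] by metis
qed

end
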